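(* Let $G$ be a finite graph obtained by the following growth process. Start from a complete graph $K_{n_0}$ with $n_0\ge 2$ (the initial simplex). At each step, choose an integer $n\ge 2$, choose one of the previously added simplexes $\sigma$ (each simplex being the vertex set of a complete subgraph added at an earlier step, or the initial one), and choose a nonempty subset $S\subseteq\sigma$ with $1\le |S|\le n-1$ (a face of $\sigma$). Then add $n-|S|$ new vertices to the graph, and add edges so that $S$ together with the new vertices induces a complete graph $K_n$; this $K_n$ is recorded as a newly added simplex. No other edges are added. Then $G$ is connected and $\delta(G)\le 1$, i.e. for every four vertices $A,B,C,D$ of $G$ labelled so that $d(A,B)+d(C,D)\le d(A,C)+d(B,D)\le d(A,D)+d(B,C)$ one has $$\frac{\big(d(A,D)+d(B,C)\big)-\big(d(A,C)+d(B,D)\big)}{2}\le 1 .$$ In particular this holds regardless of whether some edges of the attached simplexes are marked as "defect" edges (the marking only changes which faces may be chosen, not the resulting graph).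
   Context: $d(U,V)$ denotes the shortest-path (graph) distance between vertices $U,V$ of $G$. The (Gromov four-point) hyperbolicity parameter $\delta(G)$ of a connected graph $G$ is the maximum, over all quadruples of vertices $A,B,C,D$, of $(\mathcal L-\mathcal M)/2$, where $\mathcal L$ is the largest and $\mathcal M$ the middle of the three sums $d(A,B)+d(C,D)$, $d(A,C)+d(B,D)$, $d(A,D)+d(B,C)$. A simplex of order $q_{max}=n-1$ is a complete graph on $n$ vertices; a face of order $q$ of a simplex is a complete subgraph on $q+1$ of its vertices. *)

theory Defs
  imports Complex_Main
begin

text \<open>A graph is given by a vertex set V and a symmetric irreflexive adjacency relation E.
  The growth process records the graph together with the family of simplexes added so far.\<close>

inductive simplex_growth :: "'a set \<Rightarrow> ('a \<Rightarrow> 'a \<Rightarrow> bool) \<Rightarrow> 'a set set \<Rightarrow> bool" where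
  init: "finite V0 \<Longrightarrow> card V0 \<ge> 2 \<Longrightarrow>
         simplex_growth V0 (\<lambda>x y. x \<in> V0 \<and> y \<in> V0 \<and> x \<noteq> y) {V0}"
| step: "simplex_growth V E Sig \<Longrightarrow> \<sigma> \<in> Sig \<Longrightarrow> S \<subseteq> \<sigma> \<Longrightarrow>
         (n::nat) \<ge> 2 \<Longrightarrow> 1 \<le> card S \<Longrightarrow> card S \<le> n - 1 \<Longrightarrow>
         finite N \<Longrightarrow> N \<inter> V = {} \<Longrightarrow> card N = n - card S \<Longrightarrow>
         simplex_growth (V \<union> N)
           (\<lambda>x y. E x y \<or> (x \<in> S \<union> N \<and> y \<in> S \<union> N \<and> x \<noteq> y))
           (insert (S \<union> N) Sig)"

definition is_walk :: "('a \<Rightarrow> 'a \<Rightarrow> bool) \<Rightarrow> 'a list \<Rightarrow> bool" where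
  "is_walk E p \<longleftrightarrow> p \<noteq> [] \<and> (\<forall>i. Suc i < length p \<longrightarrow> E (p ! i) (p ! Suc i))"

definition connected_graph :: "'a set \<Rightarrow> ('a \<Rightarrow> 'a \<Rightarrow> bool) \<Rightarrow> bool" where
  "connected_graph V E \<longleftrightarrow>
     (\<forall>x\<in>V. \<forall>y\<in>V. \<exists>p. is_walk E p \<and> hd p = x \<and> last p = y)"

definition gdist :: "('a \<Rightarrow> 'a \<Rightarrow> bool) \<Rightarrow> 'a \<Rightarrow> 'a \<Rightarrow> nat" where
  "gdist E x y = (LEAST k. \<exists>p. is_walk E p \<and> hd p = x \<and> last p = y \<and> length p = Suc k)"

end

theory Submission
  imports Defs
begin

text \<open>Call X between two vertex sets P and Q if d(P, X) + d(Q, X) \<le> d(P, Q). The growth process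
  preserves the following invariant: for any four faces of recorded simplexes, some clique lies
  between each face of one pair and each face of the other pair, for one of the three pairings.
  Applied to four vertices, with f = d(-, X), each of the three pair sums is at most the sum of the
  values of f plus 2 (walk through X), while the two cross sums of the separated pairing are at
  least that sum; so the largest pair sum exceeds the middle one by at most 2.

  When a simplex is attached along a face S, two faces inside the new simplex are separated by the
  new simplex itself. A single new face K looks, from the old vertices, like the old face K \<inter> S,
  or like S one step further away if K contains no old vertex; the invariant of the old graph
  applied to that face transfers.\<close>

inductive reachable_within :: "('a \<Rightarrow> 'a \<Rightarrow> bool) \<Rightarrow> nat \<Rightarrow> 'a \<Rightarrow> 'a \<Rightarrow> bool" for E where
  refl: "reachable_within E k x x"
| step: "E x z \<Longrightarrow> reachable_within E k z y \<Longrightarrow> reachable_within E (Suc k) x y"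
lemma reachable_within_mono:
  "reachable_within E k x y \<Longrightarrow> k \<le> k' \<Longrightarrow> reachable_within E k' x y"
proof (induction arbitrary: k' rule: reachable_within.induct)
  case (refl k x)
  show ?case by (rule reachable_within.refl)
next
  case (step x z k y)
  then obtain k'' where "k' = Suc k''" "k \<le> k''" by (cases k') auto
  with step show ?case by (auto intro: reachable_within.step)
qed

lemma reachable_within_trans:
  "reachable_within E a x y \<Longrightarrow> reachable_within E b y z \<Longrightarrow> reachable_within E (a + b) x z"
proof (induction arbitrary: z rule: reachable_within.induct)
  case (refl k x)
  then show ?case using reachable_within_mono by fastforce
next
  case (step x w k y)
  then show ?case by (auto intro: reachable_within.step)
qed

lemma reachable_within_edge: "E x y \<Longrightarrow> reachable_within E (Suc k) x y"
  by (auto intro: reachable_within.intros)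

lemma reachable_within_sym:
  assumes "symp E"
  shows "reachable_within E k x y \<Longrightarrow> reachable_within E k y x"
proof (induction rule: reachable_within.induct)
  case (refl k x)
  show ?case by (rule reachable_within.refl)
next
  case (step x z k y)
  have "reachable_within E (Suc 0) z x"
    using step.hyps(1) assms by (auto intro: reachable_within_edge dest: sympD)
  from reachable_within_trans[OF step.IH this] show ?case by simp
qed

lemma reachable_within_map:
  assumes "reachable_within E k x y" and "\<And>a b. E a b \<Longrightarrow> E' (h a) (h b) \<or> h a = h b"
  shows "reachable_within E' k (h x) (h y)"
  using assms(1)
proof (induction rule: reachable_within.induct)
  case (refl k x)
  show ?case by (rule reachable_within.refl)
next
  case (step x z k y)
  from assms(2)[OF step.hyps(1)] show ?case
    using step.IH reachable_within_mono[OF step.IH] by (auto intro: reachable_within.step)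
qed

lemma reachable_within_subgraph:
  "reachable_within E k x y \<Longrightarrow> (\<And>a b. E a b \<Longrightarrow> E' a b) \<Longrightarrow> reachable_within E' k x y"
  using reachable_within_map[of E k x y E' id] by auto

lemma is_walk_Cons: "is_walk E (x # p) \<longleftrightarrow> p = [] \<or> E x (hd p) \<and> is_walk E p"
proof (cases p)
  case (Cons y q)
  have "(\<forall>i. Suc i < length (x # p) \<longrightarrow> E ((x # p) ! i) ((x # p) ! Suc i)) \<longleftrightarrow>
        E x y \<and> (\<forall>i. Suc i < length p \<longrightarrow> E (p ! i) (p ! Suc i))"
    using Cons by (auto simp: All_less_Suc2 less_Suc_eq_0_disj)
  then show ?thesis using Cons by (simp add: is_walk_def)
qed (simp add: is_walk_def)

lemma reachable_within_iff_walk: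
  "reachable_within E k x y \<longleftrightarrow> (\<exists>p. is_walk E p \<and> hd p = x \<and> last p = y \<and> length p \<le> Suc k)"
proof
  show "reachable_within E k x y \<Longrightarrow> \<exists>p. is_walk E p \<and> hd p = x \<and> last p = y \<and> length p \<le> Suc k"
  proof (induction rule: reachable_within.induct)
    case (refl k x)
    show ?case by (rule exI[of _ "[x]"]) (simp add: is_walk_def)
  next
    case (step x z k y)
    then obtain p where "is_walk E p" "hd p = z" "last p = y" "length p \<le> Suc k" by blast
    moreover have "p \<noteq> []" using \<open>is_walk E p\<close> by (simp add: is_walk_def)
    ultimately show ?case
      using step.hyps(1) by (intro exI[of _ "x # p"]) (auto simp: is_walk_Cons)
  qed
next
  have "is_walk E p \<Longrightarrow> reachable_within E (length p - 1) (hd p) (last p)" for p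
  proof (induction p)
    case (Cons x p)
    then show ?case
      by (cases p) (auto simp: is_walk_Cons intro: reachable_within.intros)
  qed (simp add: is_walk_def)
  then show "\<exists>p. is_walk E p \<and> hd p = x \<and> last p = y \<and> length p \<le> Suc k \<Longrightarrow> reachable_within E k x y"
    using reachable_within_mono by fastforce
qed

lemma gdist_eq_Least_reachable_within: "gdist E x y = (LEAST k. reachable_within E k x y)"
proof (cases "\<exists>k. reachable_within E k x y")
  case True
  let ?walk = "\<lambda>k. \<exists>p. is_walk E p \<and> hd p = x \<and> last p = y \<and> length p = Suc k"
  have reach_iff: "reachable_within E k x y \<longleftrightarrow> (\<exists>j\<le>k. ?walk j)" for k
  proof
    assume "reachable_within E k x y"
    then obtain p where p: "is_walk E p" "hd p = x" "last p = y" "length p \<le> Suc k"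
      by (auto simp: reachable_within_iff_walk)
    then have "length p = Suc (length p - 1)" by (cases p) (auto simp: is_walk_def)
    with p show "\<exists>j\<le>k. ?walk j" by (intro exI[of _ "length p - 1"]) auto
  qed (auto simp: reachable_within_iff_walk)
  have "?walk (Least ?walk)"
    using True by (auto simp: reach_iff intro: LeastI)
  then have "(LEAST k. reachable_within E k x y) = Least ?walk"
    by (intro Least_equality) (auto simp: reach_iff intro: Least_le order.trans)
  then show ?thesis by (simp add: gdist_def)
next
  case False
  then have no_walk: "\<not> (\<exists>p. is_walk E p \<and> hd p = x \<and> last p = y \<and> length p = Suc k)" for k
    unfolding reachable_within_iff_walk by (metis order_refl)
  have "gdist E x y = (LEAST k. False)"
    unfolding gdist_def by (rule arg_cong[where f = Least], intro ext) (use no_walk in blast)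
  with False show ?thesis by simp
qed

lemma connected_graph_iff_reachable_within:
  "connected_graph V E \<longleftrightarrow> (\<forall>x\<in>V. \<forall>y\<in>V. \<exists>k. reachable_within E k x y)"
  unfolding connected_graph_def reachable_within_iff_walk by (meson le_SucI order_refl)

definition set_gdist :: "('a \<Rightarrow> 'a \<Rightarrow> bool) \<Rightarrow> 'a set \<Rightarrow> 'a set \<Rightarrow> nat" where
  "set_gdist E P Q = (LEAST k. \<exists>p\<in>P. \<exists>q\<in>Q. reachable_within E k p q)"

lemma gdist_eq_set_gdist: "gdist E x y = set_gdist E {x} {y}"
  by (simp add: gdist_eq_Least_reachable_within set_gdist_def)

lemma set_gdist_le:
  "p \<in> P \<Longrightarrow> q \<in> Q \<Longrightarrow> reachable_within E k p q \<Longrightarrow> set_gdist E P Q \<le> k"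
  unfolding set_gdist_def by (blast intro: Least_le)

lemma set_gdist_attained:
  assumes "connected_graph V E" "P \<subseteq> V" "Q \<subseteq> V" "P \<noteq> {}" "Q \<noteq> {}"
  obtains p q where "p \<in> P" "q \<in> Q" "reachable_within E (set_gdist E P Q) p q"
proof -
  obtain p q where "p \<in> P" "q \<in> Q" using assms(4,5) by blast
  moreover obtain k where "reachable_within E k p q"
    using assms(1-3) calculation unfolding connected_graph_iff_reachable_within by blast
  ultimately have "\<exists>p\<in>P. \<exists>q\<in>Q. reachable_within E k p q" by blast
  then have "\<exists>p\<in>P. \<exists>q\<in>Q. reachable_within E (set_gdist E P Q) p q"
    unfolding set_gdist_def by (rule LeastI)
  with that show thesis by blast
qed

lemma set_gdist_commute: "symp E \<Longrightarrow> set_gdist E P Q = set_gdist E Q P"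
  unfolding set_gdist_def by (metis reachable_within_sym)

lemma gdist_commute: "symp E \<Longrightarrow> gdist E x y = gdist E y x"
  by (simp add: gdist_eq_set_gdist set_gdist_commute)

definition clique :: "('a \<Rightarrow> 'a \<Rightarrow> bool) \<Rightarrow> 'a set \<Rightarrow> bool" where
  "clique E X \<longleftrightarrow> X \<noteq> {} \<and> (\<forall>x\<in>X. \<forall>y\<in>X. x \<noteq> y \<longrightarrow> E x y)"

lemma clique_subset: "clique E X \<Longrightarrow> Y \<subseteq> X \<Longrightarrow> Y \<noteq> {} \<Longrightarrow> clique E Y"
  unfolding clique_def by blast

lemma gdist_le_via_clique:
  assumes "symp E" "connected_graph V E" "X \<subseteq> V" "clique E X" "y \<in> V" "z \<in> V"
  shows "gdist E y z \<le> set_gdist E {y} X + 1 + set_gdist E {z} X"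
proof -
  have "X \<noteq> {}" using assms(4) by (simp add: clique_def)
  moreover have "{y} \<subseteq> V" "{z} \<subseteq> V" using assms(5,6) by auto
  ultimately obtain x1 x2 where "x1 \<in> X" "x2 \<in> X"
    and y_x1: "reachable_within E (set_gdist E {y} X) y x1"
    and z_x2: "reachable_within E (set_gdist E {z} X) z x2"
    by (metis set_gdist_attained[OF assms(2) _ assms(3)] singletonD insert_not_empty)
  then have "reachable_within E 1 x1 x2"
    using assms(4) by (cases "x1 = x2") (auto simp: clique_def intro: reachable_within.intros)
  from reachable_within_trans[OF reachable_within_trans[OF y_x1 this]
      reachable_within_sym[OF assms(1) z_x2]]
  show ?thesis unfolding gdist_eq_set_gdist by (rule set_gdist_le[OF singletonI singletonI])
qed

definition between :: "('a \<Rightarrow> 'a \<Rightarrow> bool) \<Rightarrow> 'a set \<Rightarrow> 'a set \<Rightarrow> 'a set \<Rightarrow> bool" where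
  "between E X P Q \<longleftrightarrow> set_gdist E P X + set_gdist E Q X \<le> set_gdist E P Q"

definition separates ::
  "('a \<Rightarrow> 'a \<Rightarrow> bool) \<Rightarrow> 'a set \<Rightarrow> 'a set \<Rightarrow> 'a set \<Rightarrow> 'a set \<Rightarrow> 'a set \<Rightarrow> bool" where
  "separates E X P Q R T \<longleftrightarrow>
     between E X P R \<and> between E X P T \<and> between E X Q R \<and> between E X Q T"

definition quad_separated ::
  "'a set \<Rightarrow> ('a \<Rightarrow> 'a \<Rightarrow> bool) \<Rightarrow> 'a set \<Rightarrow> 'a set \<Rightarrow> 'a set \<Rightarrow> 'a set \<Rightarrow> bool" where
  "quad_separated V E P Q R T \<longleftrightarrow> (\<exists>X\<subseteq>V. clique E X \<and>
     (separates E X P Q R T \<or> separates E X P R Q T \<or> separates E X P T Q R))"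

lemma between_commute: "symp E \<Longrightarrow> between E X P Q \<longleftrightarrow> between E X Q P"
  unfolding between_def by (simp add: set_gdist_commute add.commute)

lemma quad_separated_swap12:
  "symp E \<Longrightarrow> quad_separated V E P Q R T \<Longrightarrow> quad_separated V E Q P R T"
  unfolding quad_separated_def separates_def by (metis between_commute)

lemma quad_separated_swap23: "quad_separated V E P Q R T \<Longrightarrow> quad_separated V E P R Q T"
  unfolding quad_separated_def separates_def by blast

lemma quad_separated_swap34: "quad_separated V E P Q R T \<Longrightarrow> quad_separated V E P Q T R"
  unfolding quad_separated_def separates_def by blast

lemma between_if_subset:
  assumes "symp E" "connected_graph V E" "X \<subseteq> V" "P \<subseteq> X" "P \<noteq> {}" "Q \<subseteq> V" "Q \<noteq> {}"
  shows "between E X P Q"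
proof -
  obtain p where "p \<in> P" "p \<in> X" using assms(4,5) by blast
  then have "set_gdist E P X = 0"
    using set_gdist_le[OF _ _ reachable_within.refl, of p P X E 0] by simp
  moreover obtain q p where "q \<in> Q" "p \<in> P" "reachable_within E (set_gdist E Q P) q p"
    using set_gdist_attained[OF assms(2,6)] assms(3-5,7) by (metis order_trans)
  then have "set_gdist E Q X \<le> set_gdist E Q P"
    using assms(4) by (blast intro: set_gdist_le)
  ultimately show ?thesis
    unfolding between_def using set_gdist_commute[OF assms(1), of P Q] by simp
qed

lemma between_if_either_subset:
  assumes "symp E" "connected_graph V E" "X \<subseteq> V"
    and "P \<subseteq> V" "P \<noteq> {}" "Q \<subseteq> V" "Q \<noteq> {}" "P \<subseteq> X \<or> Q \<subseteq> X"
  shows "between E X P Q"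
  using assms(8)
proof
  assume "P \<subseteq> X"
  then show ?thesis by (rule between_if_subset[OF assms(1-3) _ assms(5-7)])
next
  assume "Q \<subseteq> X"
  then have "between E X Q P" by (rule between_if_subset[OF assms(1-3) _ assms(7,4,5)])
  then show ?thesis using between_commute[OF assms(1)] by blast
qed

lemma quad_separated_if_two_in_clique:
  assumes "symp E" "connected_graph V E" "X \<subseteq> V" "clique E X"
    and sets: "\<And>K. K \<in> {P, Q, R, T} \<Longrightarrow> K \<subseteq> V \<and> K \<noteq> {}"
    and two: "P \<subseteq> X \<and> Q \<subseteq> X \<or> R \<subseteq> X \<and> T \<subseteq> X \<or> P \<subseteq> X \<and> R \<subseteq> X \<or>
      Q \<subseteq> X \<and> T \<subseteq> X \<or> P \<subseteq> X \<and> T \<subseteq> X \<or> Q \<subseteq> X \<and> R \<subseteq> X"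
  shows "quad_separated V E P Q R T"
proof -
  have between: "between E X K L"
    if "K \<in> {P, Q, R, T}" "L \<in> {P, Q, R, T}" "K \<subseteq> X \<or> L \<subseteq> X" for K L
    using between_if_either_subset[OF assms(1-3)] sets[OF that(1)] sets[OF that(2)] that(3) by blast
  from two have "separates E X P Q R T \<or> separates E X P R Q T \<or> separates E X P T Q R"
    by (elim disjE conjE) (simp_all add: separates_def between)
  with assms(3,4) show ?thesis unfolding quad_separated_def by blast
qed

lemma four_point_le_if_quad_separated:
  assumes "symp E" "connected_graph V E" "A \<in> V" "B \<in> V" "C \<in> V" "D \<in> V"
    and "quad_separated V E {A} {B} {C} {D}"
    and "gdist E A B + gdist E C D \<le> gdist E A C + gdist E B D"
  shows "gdist E A D + gdist E B C \<le> gdist E A C + gdist E B D + 2"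
proof -
  obtain X where X: "X \<subseteq> V" "clique E X" and sep: "separates E X {A} {B} {C} {D} \<or>
      separates E X {A} {C} {B} {D} \<or> separates E X {A} {D} {B} {C}"
    using assms(7) unfolding quad_separated_def by blast
  define f where "f y = set_gdist E {y} X" for y
  have between_iff: "between E X {y} {z} \<longleftrightarrow> f y + f z \<le> gdist E y z" for y z
    by (simp add: between_def f_def gdist_eq_set_gdist)
  have "gdist E A D \<le> f A + 1 + f D" "gdist E B C \<le> f B + 1 + f C"
    using gdist_le_via_clique[OF assms(1,2) X] assms(3-6) unfolding f_def by auto
  moreover have "f A + f B + f C + f D \<le> gdist E A C + gdist E B D"
    using sep
  proof (elim disjE)
    assume "separates E X {A} {B} {C} {D}"
    then show ?thesis unfolding separates_def between_iff by linarith
  next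
    assume "separates E X {A} {C} {B} {D}"
    then show ?thesis using assms(8) unfolding separates_def between_iff by linarith
  next
    assume "separates E X {A} {D} {B} {C}"
    then show ?thesis
      using gdist_commute[OF assms(1), of D B] unfolding separates_def between_iff by linarith
  qed
  ultimately show ?thesis by linarith
qed

definition attach_clique :: "('a \<Rightarrow> 'a \<Rightarrow> bool) \<Rightarrow> 'a set \<Rightarrow> 'a \<Rightarrow> 'a \<Rightarrow> bool" where
  "attach_clique E K = (\<lambda>x y. E x y \<or> (x \<in> K \<and> y \<in> K \<and> x \<noteq> y))"

locale clique_attachment =
  fixes V :: "'a set" and E :: "'a \<Rightarrow> 'a \<Rightarrow> bool" and S N :: "'a set"
  assumes symp: "symp E"
    and edge_in: "E x y \<Longrightarrow> x \<in> V \<and> y \<in> V"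
    and connected: "connected_graph V E"
    and face_subset: "S \<subseteq> V"
    and face_clique: "clique E S"
    and new_disjoint: "N \<inter> V = {}"
begin

abbreviation E' :: "'a \<Rightarrow> 'a \<Rightarrow> bool" where
  "E' \<equiv> attach_clique E (S \<union> N)"

lemma attach_edge_iff: "E' x y \<longleftrightarrow> E x y \<or> x \<in> S \<union> N \<and> y \<in> S \<union> N \<and> x \<noteq> y"
  by (simp add: attach_clique_def)

lemma symp_attach: "symp E'"
  using symp by (auto simp: symp_def attach_edge_iff)

lemma clique_attach_old: "clique E X \<Longrightarrow> clique E' X"
  by (auto simp: clique_def attach_edge_iff)

lemma clique_attach_new: "clique E' (S \<union> N)"
  using face_clique by (auto simp: clique_def attach_edge_iff)

lemma reachable_within_attach_old: "reachable_within E k x y \<Longrightarrow> reachable_within E' k x y"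
  by (erule reachable_within_subgraph) (simp add: attach_edge_iff)

text \<open>Collapsing all new vertices onto one vertex of the face turns walks of the new graph into
  walks of the old one that are no longer.\<close>
lemma reachable_within_attach_iff:
  assumes "x \<in> V" "y \<in> V"
  shows "reachable_within E' k x y \<longleftrightarrow> reachable_within E k x y"
proof
  obtain s where s: "s \<in> S" using face_clique by (auto simp: clique_def)
  define h where "h a = (if a \<in> N then s else a)" for a
  assume "reachable_within E' k x y"
  then have "reachable_within E k (h x) (h y)"
  proof (rule reachable_within_map[where h = h])
    fix a b assume "E' a b"
    show "E (h a) (h b) \<or> h a = h b"
    proof (cases "E a b")
      case True
      then have "a \<notin> N" "b \<notin> N" using edge_in new_disjoint by blast+
      with True show ?thesis by (simp add: h_def)
    next
      case False
      with \<open>E' a b\<close> have "h a \<in> S" "h b \<in> S" using s by (auto simp: attach_edge_iff h_def)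
      then show ?thesis using face_clique by (auto simp: clique_def)
    qed
  qed
  moreover have "h x = x" "h y = y" using assms new_disjoint by (auto simp: h_def)
  ultimately show "reachable_within E k x y" by simp
qed (rule reachable_within_attach_old)

lemma set_gdist_attach_old:
  assumes "P \<subseteq> V" "Q \<subseteq> V"
  shows "set_gdist E' P Q = set_gdist E P Q"
proof -
  have "(\<exists>p\<in>P. \<exists>q\<in>Q. reachable_within E' k p q) \<longleftrightarrow> (\<exists>p\<in>P. \<exists>q\<in>Q. reachable_within E k p q)" for k
    using assms reachable_within_attach_iff by blast
  then show ?thesis by (simp add: set_gdist_def)
qed

lemma between_attach_old:
  "X \<subseteq> V \<Longrightarrow> P \<subseteq> V \<Longrightarrow> Q \<subseteq> V \<Longrightarrow> between E' X P Q \<longleftrightarrow> between E X P Q"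
  by (simp add: between_def set_gdist_attach_old)

lemma connected_attach: "connected_graph (V \<union> N) E'"
proof -
  obtain s where s: "s \<in> S" "s \<in> V" using face_clique face_subset by (auto simp: clique_def)
  have to_s: "\<exists>k. reachable_within E' k x s" if "x \<in> V \<union> N" for x
  proof (cases "x \<in> V")
    case True
    then show ?thesis
      using connected s(2) reachable_within_attach_old
      unfolding connected_graph_iff_reachable_within by blast
  next
    case False
    with that s have "E' x s" using new_disjoint by (auto simp: attach_edge_iff)
    then show ?thesis by (blast intro: reachable_within_edge)
  qed
  show ?thesis unfolding connected_graph_iff_reachable_within
    using to_s reachable_within_trans reachable_within_sym[OF symp_attach] by meson
qed

lemma reachable_within_attach_from_new:
  "reachable_within E' k x w \<Longrightarrow> x \<in> N \<Longrightarrow> w \<in> V \<Longrightarrow>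
    \<exists>s\<in>S. \<exists>j. k = Suc j \<and> reachable_within E j s w"
proof (induction rule: reachable_within.induct)
  case (refl k x)
  then show ?case using new_disjoint by blast
next
  case (step x z k y)
  show ?case
  proof (cases "z \<in> N")
    case True
    then obtain s j where "s \<in> S" "k = Suc j" "reachable_within E j s y"
      using step.IH step.prems(2) by blast
    then show ?thesis using reachable_within_mono[of E j s y k] by auto
  next
    case False
    have "\<not> E x z" using step.prems(1) edge_in new_disjoint by blast
    with False step.hyps(1) have "z \<in> S" by (simp add: attach_edge_iff)
    then show ?thesis
      using step.hyps(2) step.prems(2) face_subset reachable_within_attach_iff by blast
  qed
qed

lemma set_gdist_attach_new_le:
  assumes "K \<noteq> {}" "K \<subseteq> S \<union> N" "W \<subseteq> V" "W \<noteq> {}"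
  shows "set_gdist E' K W \<le>
    (if K \<inter> S = {} then Suc (set_gdist E S W) else set_gdist E (K \<inter> S) W)"
proof (cases "K \<inter> S = {}")
  case True
  have "S \<noteq> {}" using face_clique by (simp add: clique_def)
  then obtain s w where "s \<in> S" "w \<in> W" and s_w: "reachable_within E (set_gdist E S W) s w"
    by (rule set_gdist_attained[OF connected face_subset assms(3) _ assms(4)])
  moreover obtain k where "k \<in> K" using assms(1) by blast
  moreover from calculation have "E' k s"
    using True assms(2) face_subset new_disjoint by (auto simp: attach_edge_iff)
  ultimately have "reachable_within E' (Suc (set_gdist E S W)) k w"
    by (blast intro: reachable_within.step reachable_within_attach_old)
  with \<open>k \<in> K\<close> \<open>w \<in> W\<close> True show ?thesis by (simp add: set_gdist_le)
next
  case False
  moreover have "K \<inter> S \<subseteq> V" using face_subset by blast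
  ultimately obtain p w where "p \<in> K \<inter> S" "w \<in> W"
    and "reachable_within E (set_gdist E (K \<inter> S) W) p w"
    using set_gdist_attained[OF connected _ assms(3) _ assms(4)] by blast
  with False show ?thesis by (auto intro: set_gdist_le reachable_within_attach_old)
qed

lemma set_gdist_attach_new_ge:
  assumes "K \<noteq> {}" "K \<subseteq> S \<union> N" "W \<subseteq> V" "W \<noteq> {}"
  shows "(if K \<inter> S = {} then Suc (set_gdist E S W) else set_gdist E (K \<inter> S) W) \<le>
    set_gdist E' K W"
proof -
  have "K \<subseteq> V \<union> N" "W \<subseteq> V \<union> N" using assms(2,3) face_subset by auto
  then obtain k w where "k \<in> K" "w \<in> W" and k_w: "reachable_within E' (set_gdist E' K W) k w"
    using set_gdist_attained[OF connected_attach _ _ assms(1,4)] by blast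
  have "w \<in> V" using \<open>w \<in> W\<close> assms(3) by blast
  show ?thesis
  proof (cases "k \<in> N")
    case True
    then obtain s j where "s \<in> S" and d: "set_gdist E' K W = Suc j" and s_w: "reachable_within E j s w"
      using reachable_within_attach_from_new[OF k_w _ \<open>w \<in> V\<close>] by blast
    show ?thesis
    proof (cases "K \<inter> S = {}")
      case True
      then show ?thesis using set_gdist_le[OF \<open>s \<in> S\<close> \<open>w \<in> W\<close> s_w] d by simp
    next
      case False
      then obtain s' where "s' \<in> K \<inter> S" by blast
      with \<open>s \<in> S\<close> have "reachable_within E (Suc j) s' w"
        using s_w face_clique reachable_within_mono[OF s_w]
        by (cases "s' = s") (auto simp: clique_def intro: reachable_within.step)
      with False \<open>s' \<in> K \<inter> S\<close> \<open>w \<in> W\<close> d show ?thesis by (simp add: set_gdist_le)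
    qed
  next
    case False
    with \<open>k \<in> K\<close> assms(2) have "k \<in> K \<inter> S" by blast
    moreover have "reachable_within E (set_gdist E' K W) k w"
      using k_w calculation face_subset \<open>w \<in> V\<close> reachable_within_attach_iff by blast
    ultimately show ?thesis using \<open>w \<in> W\<close> by (auto intro: set_gdist_le)
  qed
qed

lemma set_gdist_attach_new:
  assumes "K \<noteq> {}" "K \<subseteq> S \<union> N" "W \<subseteq> V" "W \<noteq> {}"
  shows "set_gdist E' K W =
    (if K \<inter> S = {} then Suc (set_gdist E S W) else set_gdist E (K \<inter> S) W)"
  using set_gdist_attach_new_le[OF assms] set_gdist_attach_new_ge[OF assms] by (rule antisym)

lemma separates_attach_old:
  "\<forall>Y\<in>{X, P, Q, R, T}. Y \<subseteq> V \<Longrightarrow> separates E' X P Q R T \<longleftrightarrow> separates E X P Q R T"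
  by (simp add: separates_def between_attach_old)

lemma quad_separated_attach_old:
  assumes "\<forall>Y\<in>{P, Q, R, T}. Y \<subseteq> V" "quad_separated V E P Q R T"
  shows "quad_separated (V \<union> N) E' P Q R T"
proof -
  obtain X where "X \<subseteq> V" "clique E X"
    and "separates E X P Q R T \<or> separates E X P R Q T \<or> separates E X P T Q R"
    using assms(2) unfolding quad_separated_def by blast
  with assms(1) have "separates E' X P Q R T \<or> separates E' X P R Q T \<or> separates E' X P T Q R"
    by (simp add: separates_attach_old)
  moreover have "X \<subseteq> V \<union> N" using \<open>X \<subseteq> V\<close> by blast
  ultimately show ?thesis
    unfolding quad_separated_def using clique_attach_old[OF \<open>clique E X\<close>] by blast
qed

lemma quad_separated_attach_new:
  assumes "K \<noteq> {}" "K \<subseteq> S \<union> N"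
    and old: "\<And>W. W \<in> {A, B, C} \<Longrightarrow> W \<subseteq> V \<and> W \<noteq> {}"
    and "quad_separated V E (if K \<inter> S = {} then S else K \<inter> S) A B C"
  shows "quad_separated (V \<union> N) E' K A B C"
proof -
  define \<pi> where "\<pi> = (if K \<inter> S = {} then S else K \<inter> S)"
  obtain X where "X \<subseteq> V" "clique E X"
    and sep: "separates E X \<pi> A B C \<or> separates E X \<pi> B A C \<or> separates E X \<pi> C A B"
    using assms(4) unfolding quad_separated_def \<pi>_def by blast
  have "X \<noteq> {}" using \<open>clique E X\<close> by (simp add: clique_def)
  have shift: "set_gdist E' K Y = (if K \<inter> S = {} then 1 else 0) + set_gdist E \<pi> Y"
    if "Y \<subseteq> V" "Y \<noteq> {}" for Y
    using set_gdist_attach_new[OF assms(1,2) that] by (simp add: \<pi>_def)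
  have new: "between E' X K W \<longleftrightarrow> between E X \<pi> W" if "W \<in> {A, B, C}" for W
    using shift[OF \<open>X \<subseteq> V\<close> \<open>X \<noteq> {}\<close>] shift[of W] old[OF that] \<open>X \<subseteq> V\<close>
    by (simp add: between_def set_gdist_attach_old)
  have unchanged: "between E' X W W' \<longleftrightarrow> between E X W W'" if "W \<in> {A, B, C}" "W' \<in> {A, B, C}" for W W'
    using old[OF that(1)] old[OF that(2)] \<open>X \<subseteq> V\<close> by (simp add: between_attach_old)
  from sep have "separates E' X K A B C \<or> separates E' X K B A C \<or> separates E' X K C A B"
    by (elim disjE) (simp_all add: separates_def new unchanged)
  moreover have "X \<subseteq> V \<union> N" using \<open>X \<subseteq> V\<close> by blast
  ultimately show ?thesis
    unfolding quad_separated_def using clique_attach_old[OF \<open>clique E X\<close>] by blast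
qed

end

definition faces :: "'a set set \<Rightarrow> 'a set set" where
  "faces Sig = {K. K \<noteq> {} \<and> (\<exists>\<sigma>\<in>Sig. K \<subseteq> \<sigma>)}"

definition faces_quad_separated :: "'a set \<Rightarrow> ('a \<Rightarrow> 'a \<Rightarrow> bool) \<Rightarrow> 'a set set \<Rightarrow> bool" where
  "faces_quad_separated V E Sig \<longleftrightarrow>
     (\<forall>P\<in>faces Sig. \<forall>Q\<in>faces Sig. \<forall>R\<in>faces Sig. \<forall>T\<in>faces Sig. quad_separated V E P Q R T)"

context clique_attachment
begin

lemma faces_quad_separated_attach:
  assumes quad: "faces_quad_separated V E Sig" and "\<Union>Sig \<subseteq> V" "\<sigma> \<in> Sig" "S \<subseteq> \<sigma>"
  shows "faces_quad_separated (V \<union> N) E' (insert (S \<union> N) Sig)"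
  unfolding faces_quad_separated_def
proof (intro ballI)
  let ?new_faces = "faces (insert (S \<union> N) Sig)"
  have old_face: "K \<subseteq> V \<and> K \<noteq> {}" if "K \<in> faces Sig" for K
    using that assms(2) by (auto simp: faces_def)
  have new_face: "(K \<in> faces Sig \<or> K \<subseteq> S \<union> N) \<and> K \<subseteq> V \<union> N \<and> K \<noteq> {}"
    if "K \<in> ?new_faces" for K
    using that assms(2) face_subset by (auto simp: faces_def)
  have port: "(if K \<inter> S = {} then S else K \<inter> S) \<in> faces Sig" for K
    using face_clique assms(3,4) by (auto simp: faces_def clique_def)
  have one_new: "quad_separated (V \<union> N) E' K A B C"
    if "K \<in> ?new_faces" "K \<subseteq> S \<union> N" "A \<in> faces Sig" "B \<in> faces Sig" "C \<in> faces Sig" for K A B C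
  proof -
    have "K \<noteq> {}" using new_face[OF that(1)] by blast
    moreover have "W \<subseteq> V \<and> W \<noteq> {}" if "W \<in> {A, B, C}" for W
      using that old_face \<open>A \<in> faces Sig\<close> \<open>B \<in> faces Sig\<close> \<open>C \<in> faces Sig\<close> by auto
    moreover have "quad_separated V E (if K \<inter> S = {} then S else K \<inter> S) A B C"
      using quad port that(3-5) unfolding faces_quad_separated_def by blast
    ultimately show ?thesis by (rule quad_separated_attach_new[OF _ that(2)])
  qed
  fix P Q R T assume faces: "P \<in> ?new_faces" "Q \<in> ?new_faces" "R \<in> ?new_faces" "T \<in> ?new_faces"
  have in_face: "K \<in> faces Sig \<or> K \<subseteq> S \<union> N" if "K \<in> ?new_faces" for K
    using new_face[OF that] by blast
  consider (old) "P \<in> faces Sig" "Q \<in> faces Sig" "R \<in> faces Sig" "T \<in> faces Sig"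
    | (new_P) "P \<subseteq> S \<union> N" "Q \<in> faces Sig" "R \<in> faces Sig" "T \<in> faces Sig"
    | (new_Q) "P \<in> faces Sig" "Q \<subseteq> S \<union> N" "R \<in> faces Sig" "T \<in> faces Sig"
    | (new_R) "P \<in> faces Sig" "Q \<in> faces Sig" "R \<subseteq> S \<union> N" "T \<in> faces Sig"
    | (new_T) "P \<in> faces Sig" "Q \<in> faces Sig" "R \<in> faces Sig" "T \<subseteq> S \<union> N"
    | (two_new) "P \<subseteq> S \<union> N \<and> Q \<subseteq> S \<union> N \<or> R \<subseteq> S \<union> N \<and> T \<subseteq> S \<union> N \<or>
       P \<subseteq> S \<union> N \<and> R \<subseteq> S \<union> N \<or> Q \<subseteq> S \<union> N \<and> T \<subseteq> S \<union> N \<or>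
       P \<subseteq> S \<union> N \<and> T \<subseteq> S \<union> N \<or> Q \<subseteq> S \<union> N \<and> R \<subseteq> S \<union> N"
    using in_face[OF faces(1)] in_face[OF faces(2)] in_face[OF faces(3)] in_face[OF faces(4)]
    by argo
  then show "quad_separated (V \<union> N) E' P Q R T"
  proof cases
    case old
    then show ?thesis
      using quad_separated_attach_old old_face quad by (simp add: faces_quad_separated_def)
  next
    case new_P
    then show ?thesis using one_new[OF faces(1)] by blast
  next
    case new_Q
    then show ?thesis using quad_separated_swap12[OF symp_attach one_new[OF faces(2)]] by blast
  next
    case new_R
    then show ?thesis
      using quad_separated_swap23[OF quad_separated_swap12[OF symp_attach one_new[OF faces(3)]]]
      by blast
  next
    case new_T
    then show ?thesis
      using quad_separated_swap34[OF quad_separated_swap23[OF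
          quad_separated_swap12[OF symp_attach one_new[OF faces(4)]]]]
      by blast
  next
    case two_new
    have "S \<union> N \<subseteq> V \<union> N" using face_subset by blast
    moreover have "K \<subseteq> V \<union> N \<and> K \<noteq> {}" if "K \<in> {P, Q, R, T}" for K
      using that new_face faces by blast
    ultimately show ?thesis
      by (rule quad_separated_if_two_in_clique[OF symp_attach connected_attach _ clique_attach_new
            _ two_new])
  qed
qed

end

lemma simplex_growth_symp: "simplex_growth V E Sig \<Longrightarrow> symp E"
  by (induction rule: simplex_growth.induct) (auto simp: symp_def)

lemma simplex_growth_Union: "simplex_growth V E Sig \<Longrightarrow> \<Union>Sig = V"
  by (induction rule: simplex_growth.induct) auto

lemma simplex_growth_edge_in: "simplex_growth V E Sig \<Longrightarrow> E x y \<Longrightarrow> x \<in> V \<and> y \<in> V"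
proof (induction rule: simplex_growth.induct)
  case (step V E Sig \<sigma> S n N)
  then show ?case using simplex_growth_Union[OF step.hyps(1)] by blast
qed auto

lemma simplex_growth_clique: "simplex_growth V E Sig \<Longrightarrow> \<sigma> \<in> Sig \<Longrightarrow> clique E \<sigma>"
proof (induction arbitrary: \<sigma> rule: simplex_growth.induct)
  case (init V0)
  then show ?case by (auto simp: clique_def)
next
  case (step V E Sig \<tau> S n N)
  then show ?case by (fastforce simp: clique_def)
qed

lemma simplex_growth_attachment:
  assumes "simplex_growth V E Sig" "connected_graph V E"
    and "\<sigma> \<in> Sig" "S \<subseteq> \<sigma>" "S \<noteq> {}" "N \<inter> V = {}"
  shows "clique_attachment V E S N"
proof
  show "S \<subseteq> V" using simplex_growth_Union[OF assms(1)] assms(3,4) by blast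
  show "clique E S"
    using clique_subset[OF simplex_growth_clique[OF assms(1,3)] assms(4,5)] .
  show "symp E" using assms(1) by (rule simplex_growth_symp)
  show "E x y \<Longrightarrow> x \<in> V \<and> y \<in> V" for x y using assms(1) by (rule simplex_growth_edge_in)
qed (use assms in auto)

lemma simplex_growth_connected: "simplex_growth V E Sig \<Longrightarrow> connected_graph V E"
proof (induction rule: simplex_growth.induct)
  case (init V0)
  then show ?case
    by (auto simp: connected_graph_iff_reachable_within intro: reachable_within.refl
        reachable_within_edge[where k = 0])
next
  case (step V E Sig \<sigma> S n N)
  then have "clique_attachment V E S N"
    by (intro simplex_growth_attachment) auto
  then show ?case
    using clique_attachment.connected_attach unfolding attach_clique_def by blast
qed

lemma simplex_growth_faces_quad_separated:
  "simplex_growth V E Sig \<Longrightarrow> faces_quad_separated V E Sig"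
proof (induction rule: simplex_growth.induct)
  case (init V0)
  let ?E = "\<lambda>x y. x \<in> V0 \<and> y \<in> V0 \<and> x \<noteq> y"
  have growth: "simplex_growth V0 ?E {V0}" using init by (rule simplex_growth.init)
  have "quad_separated V0 ?E P Q R T" if "\<forall>K\<in>{P, Q, R, T}. K \<in> faces {V0}" for P Q R T
    using that simplex_growth_symp[OF growth] simplex_growth_connected[OF growth]
      simplex_growth_clique[OF growth]
    by (intro quad_separated_if_two_in_clique[of _ V0]) (auto simp: faces_def)
  then show ?case unfolding faces_quad_separated_def by simp
next
  case (step V E Sig \<sigma> S n N)
  then have "clique_attachment V E S N"
    by (intro simplex_growth_attachment simplex_growth_connected) auto
  then show ?case
    using clique_attachment.faces_quad_separated_attach[of V E S N Sig \<sigma>] step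
      simplex_growth_Union[OF step.hyps(1)]
    unfolding attach_clique_def by blast
qed

theorem mainTheorem1:
  fixes V :: "'a set" and E :: "'a \<Rightarrow> 'a \<Rightarrow> bool" and Sig :: "'a set set"
  assumes "simplex_growth V E Sig"
  shows "connected_graph V E \<and>
    (\<forall>A\<in>V. \<forall>B\<in>V. \<forall>C\<in>V. \<forall>D\<in>V.
      gdist E A B + gdist E C D \<le> gdist E A C + gdist E B D \<longrightarrow>
      gdist E A C + gdist E B D \<le> gdist E A D + gdist E B C \<longrightarrow>
      (real (gdist E A D + gdist E B C) - real (gdist E A C + gdist E B D)) / 2 \<le> 1)"
proof -
  have sym: "symp E" and connected: "connected_graph V E"
    using assms by (rule simplex_growth_symp, rule simplex_growth_connected)
  have "{v} \<in> faces Sig" if "v \<in> V" for v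
    using that simplex_growth_Union[OF assms] by (auto simp: faces_def)
  then have quad: "quad_separated V E {A} {B} {C} {D}" if "A \<in> V" "B \<in> V" "C \<in> V" "D \<in> V" for A B C D
    using simplex_growth_faces_quad_separated[OF assms] that
    unfolding faces_quad_separated_def by blast
  have "real (gdist E A D + gdist E B C) \<le> real (gdist E A C + gdist E B D) + 2"
    if "A \<in> V" "B \<in> V" "C \<in> V" "D \<in> V"
      \<comment> \<open>only the first of the two ordering hypotheses is needed\<close>
      and "gdist E A B + gdist E C D \<le> gdist E A C + gdist E B D" for A B C D
    using four_point_le_if_quad_separated[OF sym connected that(1-4) quad[OF that(1-4)] that(5)]
    by linarith
  with connected show ?thesis by fastforce
qed

end
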